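(* There exist absolute constants $C>0$, $c>0$ and $m_0$ such that for all positive integers $n,m$ with $m\le \frac{\sqrt{n}}{2}$, \[\operatorname{scp}(K_n-K_m)\ \ge\ (2m-1)n-Cm^2,\] and if moreover $m\ge m_0$, \[\operatorname{scp}(K_n-K_m)\ \le\ (2m-1)n-cm^2.\] (That is, $(2m-1)n-O(m^2)\le \operatorname{scp}(K_n-K_m)\le (2m-1)n-\Omega(m^2)$ for $m\le\sqrt n/2$.)
   Context: $K_n-K_m$ denotes the graph obtained from $K_n$ by deleting all edges among a fixed set of $m$ of its vertices. A clique partition of a graph $G$ is a family of cliques of $G$ such that every edge has both endpoints in exactly one member; $\operatorname{scp}(G)$ is the minimum of the sum of the sizes of the cliques over all clique partitions of $G$. *)

theory Defs
  imports Complex_Main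
begin

text \<open>The graph K_n - K_m: vertex set {0..<n}; the fixed m-set is {0..<m};
  two distinct vertices are adjacent unless both lie in {0..<m}.\<close>

definition KnKm_adj :: "nat \<Rightarrow> nat \<Rightarrow> nat \<Rightarrow> nat \<Rightarrow> bool" where
  "KnKm_adj n m u v \<longleftrightarrow> u < n \<and> v < n \<and> u \<noteq> v \<and> \<not> (u < m \<and> v < m)"

definition is_clique :: "nat \<Rightarrow> nat \<Rightarrow> nat set \<Rightarrow> bool" where
  "is_clique n m Q \<longleftrightarrow> Q \<subseteq> {0..<n} \<and> (\<forall>u\<in>Q. \<forall>v\<in>Q. u \<noteq> v \<longrightarrow> KnKm_adj n m u v)"

definition is_clique_partition :: "nat \<Rightarrow> nat \<Rightarrow> nat set set \<Rightarrow> bool" where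
  "is_clique_partition n m P \<longleftrightarrow> finite P \<and> (\<forall>Q\<in>P. is_clique n m Q) \<and>
     (\<forall>u v. KnKm_adj n m u v \<longrightarrow> (\<exists>!Q. Q \<in> P \<and> u \<in> Q \<and> v \<in> Q))"

definition scp_KnKm :: "nat \<Rightarrow> nat \<Rightarrow> nat" where
  "scp_KnKm n m = Min {\<Sum>Q\<in>P. card Q | P. is_clique_partition n m P}"

end

theory Submission
  imports Defs
begin

(*
  Write d(v) for the number of cliques of a clique partition P through v; the total size of P
  is the sum of d(v) over all vertices.  Let A = {0..<m} be the independent set.

  If some clique Z has at least 2m vertices, then every vertex of Z outside A has d >= m (its
  edges to A lie in distinct cliques, since A is independent), and every vertex outside Z has
  d >= |Z| - 1 (its edges to Z - A lie in distinct cliques, since two of them would otherwise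
  cover an edge of Z twice).  The resulting bound (|Z| - 1)(n - |Z| + m) is concave in |Z| and
  at least (2m - 1)(n - m) on the admissible range 2m <= |Z| <= n - m + 1.
  Otherwise every clique has at most 2m - 1 vertices, so each of the n - m vertices outside A
  has d >= (n - 1)/(2m - 2), which is at least 2m - 1 once n >= 4m^2.

  Conversely, the star through vertex 0 and all outer vertices, together with the single edges
  from the other vertices of A, is a clique partition of total size (2m - 1)(n - m) + 1.
  Hence scp(K_n - K_m) = (2m - 1)n - 2m^2 + O(m), which gives C = 2, c = 1 and m0 = 2.
*)

lemma clique_partitionD:
  assumes "is_clique_partition n m P"
  shows "finite P"
    and "\<And>Q. Q \<in> P \<Longrightarrow> Q \<subseteq> {0..<n}"
    and "\<And>Q u v. Q \<in> P \<Longrightarrow> u \<in> Q \<Longrightarrow> v \<in> Q \<Longrightarrow> u \<noteq> v \<Longrightarrow> KnKm_adj n m u v"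
    and "\<And>u v. KnKm_adj n m u v \<Longrightarrow> \<exists>Q\<in>P. u \<in> Q \<and> v \<in> Q"
    and "\<And>u v Q Q'. KnKm_adj n m u v \<Longrightarrow> Q \<in> P \<Longrightarrow> u \<in> Q \<Longrightarrow> v \<in> Q \<Longrightarrow>
           Q' \<in> P \<Longrightarrow> u \<in> Q' \<Longrightarrow> v \<in> Q' \<Longrightarrow> Q = Q'"
  using assms unfolding is_clique_partition_def is_clique_def Ex1_def by (simp_all, metis+)

lemma clique_partition_finite_clique:
  assumes "is_clique_partition n m P" and "Q \<in> P"
  shows "finite Q"
  by (rule finite_subset[OF clique_partitionD(2)[OF assms]]) simp

definition clique_degree :: "nat set set \<Rightarrow> nat \<Rightarrow> nat" where
  "clique_degree P v = card {Q \<in> P. v \<in> Q}"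

lemma sum_card_eq_sum_clique_degree:
  assumes "is_clique_partition n m P"
  shows "(\<Sum>Q\<in>P. card Q) = (\<Sum>v<n. clique_degree P v)"
proof -
  have fin: "finite P" using clique_partitionD(1)[OF assms] .
  have "(\<Sum>Q\<in>P. card Q) = (\<Sum>Q\<in>P. \<Sum>v<n. if v \<in> Q then 1 else 0)"
  proof (rule sum.cong[OF refl])
    fix Q assume "Q \<in> P"
    then have "Q \<subseteq> {0..<n}" by (rule clique_partitionD(2)[OF assms])
    then have "Q = {v \<in> {..<n}. v \<in> Q}" by auto
    also have "card \<dots> = (\<Sum>v<n. if v \<in> Q then 1 else 0)"
      using sum.inter_filter[of "{..<n}" "\<lambda>_. 1::nat" "\<lambda>v. v \<in> Q"] by simp
    finally show "card Q = (\<Sum>v<n. if v \<in> Q then 1 else 0)" .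
  qed
  also have "\<dots> = (\<Sum>v<n. \<Sum>Q\<in>P. if v \<in> Q then 1 else 0)"
    by (rule sum.swap)
  also have "\<dots> = (\<Sum>v<n. clique_degree P v)"
  proof (rule sum.cong[OF refl])
    fix v show "(\<Sum>Q\<in>P. if v \<in> Q then 1 else 0) = clique_degree P v"
      using sum.inter_filter[OF fin, of "\<lambda>_. 1::nat" "\<lambda>Q. v \<in> Q"]
      by (simp add: clique_degree_def)
  qed
  finally show ?thesis .
qed

text \<open>Every vertex of W shares a clique with v, so the cliques through v cover W.\<close>
lemma card_le_mult_clique_degree:
  assumes cp: "is_clique_partition n m P"
    and adj: "\<forall>w\<in>W. KnKm_adj n m v w"
    and meet: "\<forall>Q\<in>P. v \<in> Q \<longrightarrow> card (Q \<inter> W) \<le> k"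
  shows "card W \<le> k * clique_degree P v"
proof -
  have "W \<subseteq> (\<Union>Q\<in>{Q \<in> P. v \<in> Q}. Q \<inter> W)"
  proof
    fix w assume "w \<in> W"
    with adj obtain Q where "Q \<in> P" "v \<in> Q" "w \<in> Q"
      using clique_partitionD(4)[OF cp] by blast
    with \<open>w \<in> W\<close> show "w \<in> (\<Union>Q\<in>{Q \<in> P. v \<in> Q}. Q \<inter> W)" by blast
  qed
  moreover have "finite (\<Union>Q\<in>{Q \<in> P. v \<in> Q}. Q \<inter> W)"
    using clique_partitionD(1)[OF cp] clique_partition_finite_clique[OF cp]
    by (intro finite_UN_I) auto
  ultimately have "card W \<le> card (\<Union>Q\<in>{Q \<in> P. v \<in> Q}. Q \<inter> W)"
    by (intro card_mono)
  also have "\<dots> \<le> (\<Sum>Q\<in>{Q \<in> P. v \<in> Q}. card (Q \<inter> W))"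
    using clique_partitionD(1)[OF cp] by (intro card_UN_le) auto
  also have "\<dots> \<le> (\<Sum>Q\<in>{Q \<in> P. v \<in> Q}. k)"
    using meet by (intro sum_mono) auto
  finally show ?thesis by (simp add: clique_degree_def mult.commute)
qed

lemma card_clique_Int_lessThan_le_1:
  assumes "is_clique_partition n m P" and "Q \<in> P"
  shows "card (Q \<inter> {..<m}) \<le> 1"
  using clique_partitionD(3)[OF assms] clique_partition_finite_clique[OF assms]
  unfolding One_nat_def by (subst card_le_Suc0_iff_eq) (auto simp: KnKm_adj_def)

lemma card_clique_le_Suc:
  assumes "is_clique_partition n m P" and "Q \<in> P"
  shows "card Q \<le> Suc (card (Q - {..<m}))"
  using card_clique_Int_lessThan_le_1[OF assms]
    card_Int_Diff[OF clique_partition_finite_clique[OF assms], of "{..<m}"]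
  by simp

lemma clique_degree_ge_m:
  assumes cp: "is_clique_partition n m P" and "m \<le> v" "v < n"
  shows "m \<le> clique_degree P v"
proof -
  have "card {..<m} \<le> 1 * clique_degree P v"
    using assms card_clique_Int_lessThan_le_1[OF cp]
    by (intro card_le_mult_clique_degree[OF cp]) (auto simp: KnKm_adj_def)
  then show ?thesis by simp
qed

text \<open>Two vertices of Z - {..<m} already share the clique Z, so no other clique through v
  contains both.\<close>
lemma clique_degree_ge_outside_clique:
  assumes cp: "is_clique_partition n m P" and Z: "Z \<in> P" and v: "v < n" "v \<notin> Z"
  shows "card (Z - {..<m}) \<le> clique_degree P v"
proof -
  have "card (Q \<inter> (Z - {..<m})) \<le> Suc 0" if Q: "Q \<in> P" "v \<in> Q" for Q
  proof (subst card_le_Suc0_iff_eq)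
    show "finite (Q \<inter> (Z - {..<m}))"
      using clique_partition_finite_clique[OF cp Q(1)] by simp
    show "\<forall>a\<in>Q \<inter> (Z - {..<m}). \<forall>b\<in>Q \<inter> (Z - {..<m}). a = b"
    proof (intro ballI, rule ccontr)
      fix a b assume a: "a \<in> Q \<inter> (Z - {..<m})" and b: "b \<in> Q \<inter> (Z - {..<m})" and "a \<noteq> b"
      then have "KnKm_adj n m a b" using clique_partitionD(3)[OF cp Z] by blast
      moreover have "Q \<noteq> Z" using Q v by blast
      ultimately show False
        using clique_partitionD(5)[OF cp _ Q(1) _ _ Z] Q(2) a b by blast
    qed
  qed
  moreover have "\<forall>w\<in>Z - {..<m}. KnKm_adj n m v w"
    using v clique_partitionD(2)[OF cp Z] by (auto simp: KnKm_adj_def)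
  ultimately show ?thesis
    using card_le_mult_clique_degree[OF cp, of "Z - {..<m}" v 1] by simp
qed

lemma clique_degree_ge_bounded_cliques:
  assumes cp: "is_clique_partition n m P" and small: "\<forall>Q\<in>P. card Q \<le> Suc k"
    and v: "m \<le> v" "v < n"
  shows "n - 1 \<le> k * clique_degree P v"
proof -
  have "card (Q \<inter> ({0..<n} - {v})) \<le> k" if "Q \<in> P" "v \<in> Q" for Q
  proof -
    have "Q \<inter> ({0..<n} - {v}) = Q - {v}" using clique_partitionD(2)[OF cp \<open>Q \<in> P\<close>] by auto
    then show ?thesis
      using that small clique_partition_finite_clique[OF cp \<open>Q \<in> P\<close>] by auto
  qed
  moreover have "\<forall>w\<in>{0..<n} - {v}. KnKm_adj n m v w" using v by (auto simp: KnKm_adj_def)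
  ultimately show ?thesis
    using card_le_mult_clique_degree[OF cp, of "{0..<n} - {v}" v k] v by simp
qed

lemma sum_clique_degree_ge_large_clique:
  assumes cp: "is_clique_partition n m P" and Z: "Z \<in> P"
  shows "(card Z - 1) * (n - card Z + m) \<le> (\<Sum>v<n. clique_degree P v)"
proof -
  let ?B = "Z - {..<m}"
  have Zsub: "Z \<subseteq> {..<n}" using clique_partitionD(2)[OF cp Z] by auto
  have finZ: "finite Z" using clique_partition_finite_clique[OF cp Z] .
  have B: "card Z - 1 \<le> card ?B" using card_clique_le_Suc[OF cp Z] by simp
  have "(card Z - 1) * (n - card Z) \<le> card ?B * card ({..<n} - Z)"
    using B Zsub finZ by (simp add: card_Diff_subset)
  also have "\<dots> = (\<Sum>v\<in>{..<n} - Z. card ?B)" by simp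
  also have "\<dots> \<le> (\<Sum>v\<in>{..<n} - Z. clique_degree P v)"
    using clique_degree_ge_outside_clique[OF cp Z] by (intro sum_mono) auto
  finally have outside: "(card Z - 1) * (n - card Z) \<le> (\<Sum>v\<in>{..<n} - Z. clique_degree P v)" .
  have "(card Z - 1) * m \<le> (\<Sum>v\<in>?B. m)" using B by simp
  also have "\<dots> \<le> (\<Sum>v\<in>?B. clique_degree P v)"
    using clique_degree_ge_m[OF cp] Zsub by (intro sum_mono) auto
  also have "\<dots> \<le> (\<Sum>v\<in>Z. clique_degree P v)"
    using finZ by (intro sum_mono2) auto
  finally have inside: "(card Z - 1) * m \<le> (\<Sum>v\<in>Z. clique_degree P v)" .
  have "(\<Sum>v<n. clique_degree P v) = (\<Sum>v\<in>{..<n} - Z. clique_degree P v) + (\<Sum>v\<in>Z. clique_degree P v)"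
    using Zsub by (simp add: sum.subset_diff)
  with outside inside show ?thesis by (simp add: add_mult_distrib2)
qed

lemma sum_clique_degree_ge_small_cliques:
  assumes cp: "is_clique_partition n m P" and small: "\<forall>Q\<in>P. card Q \<le> Suc k"
  shows "(n - m) * (n - 1) \<le> k * (\<Sum>v<n. clique_degree P v)"
proof -
  have "(n - m) * (n - 1) = (\<Sum>v\<in>{m..<n}. n - 1)" by simp
  also have "\<dots> \<le> (\<Sum>v\<in>{m..<n}. k * clique_degree P v)"
    using clique_degree_ge_bounded_cliques[OF cp small] by (intro sum_mono) auto
  also have "\<dots> \<le> (\<Sum>v<n. k * clique_degree P v)"
    by (intro sum_mono2) auto
  finally show ?thesis by (simp add: sum_distrib_left)
qed

text \<open>The bound (L - 1)(n - L + m) is concave in L and equals (2m - 1)(n - m) at both ends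
  L = 2m and L = n - m + 1.\<close>
lemma large_clique_bound_arith:
  fixes m n L :: nat
  assumes "2 * m \<le> L" and "L \<le> n - m + 1"
  shows "(2 * m - 1) * (n - m) \<le> (L - 1) * (n - L + m)"
proof (cases "m = 0")
  case False
  then have le: "1 \<le> m" "m + 1 \<le> n" "L \<le> n" using assms by auto
  have "int ((2 * m - 1) * (n - m)) = (2 * int m - 1) * (int n - int m)"
    using le by (simp add: of_nat_diff)
  moreover have "int ((L - 1) * (n - L + m)) = (int L - 1) * (int n - int L + int m)"
    using le assms by (simp add: of_nat_diff)
  moreover have "(int L - 1) * (int n - int L + int m) - (2 * int m - 1) * (int n - int m)
      = (int L - 2 * int m) * (int n - int m + 1 - int L)"
    by (simp add: algebra_simps)
  moreover have "0 \<le> (int L - 2 * int m) * (int n - int m + 1 - int L)"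
    using assms le by (intro mult_nonneg_nonneg) auto
  ultimately show ?thesis by linarith
qed simp

lemma less_of_four_mul_sq_le:
  fixes m n :: nat
  assumes "0 < m" and "4 * m^2 \<le> n"
  shows "m < n"
proof -
  have "m \<le> m^2" by (simp add: power2_eq_square)
  with assms show ?thesis by linarith
qed

lemma clique_partition_size_ge:
  assumes cp: "is_clique_partition n m P" and m: "0 < m" and n: "4 * m^2 \<le> n"
  shows "(2 * m - 1) * (n - m) \<le> (\<Sum>Q\<in>P. card Q)"
proof -
  have mn: "m < n" using less_of_four_mul_sq_le[OF m n] .
  have S: "(\<Sum>Q\<in>P. card Q) = (\<Sum>v<n. clique_degree P v)"
    by (rule sum_card_eq_sum_clique_degree[OF cp])
  show ?thesis
  proof (cases "\<exists>Z\<in>P. 2 * m \<le> card Z")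
    case True
    then obtain Z where Z: "Z \<in> P" "2 * m \<le> card Z" by blast
    have "Z - {..<m} \<subseteq> {m..<n}" using clique_partitionD(2)[OF cp Z(1)] by auto
    then have "card (Z - {..<m}) \<le> n - m" using card_mono[of "{m..<n}"] by fastforce
    then have "card Z \<le> n - m + 1" using card_clique_le_Suc[OF cp Z(1)] by simp
    then show ?thesis
      using large_clique_bound_arith[OF Z(2)] sum_clique_degree_ge_large_clique[OF cp Z(1)] S
      by (metis le_trans)
  next
    case False
    then have "\<forall>Q\<in>P. card Q \<le> Suc (2 * m - 2)" by auto
    from sum_clique_degree_ge_small_cliques[OF cp this]
    have small: "(n - m) * (n - 1) \<le> (2 * m - 2) * (\<Sum>Q\<in>P. card Q)" by (simp add: S)
    have "(2 * m - 1) * (2 * m - 2) \<le> n - 1"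
      using n m by (simp add: power2_eq_square algebra_simps diff_mult_distrib diff_mult_distrib2)
    then have "(2 * m - 2) * ((2 * m - 1) * (n - m)) \<le> (n - m) * (n - 1)"
      by (metis mult.commute mult.left_commute mult_le_mono2)
    with small have "(2 * m - 2) * ((2 * m - 1) * (n - m)) \<le> (2 * m - 2) * (\<Sum>Q\<in>P. card Q)"
      by linarith
    moreover have "0 < 2 * m - 2"
      using small m mn by (cases "m = 1") auto
    ultimately show ?thesis by simp
  qed
qed

definition star_clique_partition :: "nat \<Rightarrow> nat \<Rightarrow> nat set set" where
  "star_clique_partition n m =
     insert (insert 0 {m..<n}) ((\<lambda>(a, b). {a, b}) ` ({1..<m} \<times> {m..<n}))"

lemma star_clique_partition_covers_iff:
  assumes "KnKm_adj n m u v"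
  shows "Q \<in> star_clique_partition n m \<and> u \<in> Q \<and> v \<in> Q \<longleftrightarrow>
         Q = (if u \<in> {1..<m} \<or> v \<in> {1..<m} then {u, v} else insert 0 {m..<n})"
  using assms unfolding star_clique_partition_def KnKm_adj_def
  by (cases "u \<in> {1..<m} \<or> v \<in> {1..<m}") (auto simp: doubleton_eq_iff)

lemma is_clique_partition_star:
  assumes "0 < m" "m < n"
  shows "is_clique_partition n m (star_clique_partition n m)"
  unfolding is_clique_partition_def
proof (intro conjI ballI allI impI)
  show "finite (star_clique_partition n m)" by (simp add: star_clique_partition_def)
  show "is_clique n m Q" if "Q \<in> star_clique_partition n m" for Q
    using that assms unfolding star_clique_partition_def is_clique_def KnKm_adj_def by auto
  show "\<exists>!Q. Q \<in> star_clique_partition n m \<and> u \<in> Q \<and> v \<in> Q" if "KnKm_adj n m u v" for u v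
    by (simp add: star_clique_partition_covers_iff[OF that])
qed

lemma sum_card_star_clique_partition:
  assumes "0 < m" "m < n"
  shows "(\<Sum>Q\<in>star_clique_partition n m. card Q) = (2 * m - 1) * (n - m) + 1"
proof -
  let ?E = "(\<lambda>(a, b). {a, b}) ` ({1..<m} \<times> {m..<n})"
  have inj: "inj_on (\<lambda>(a, b). {a, b}) ({1..<m} \<times> {m..<n})"
    by (auto simp: inj_on_def doubleton_eq_iff)
  have "(\<Sum>Q\<in>?E. card Q) = (\<Sum>(a, b)\<in>{1..<m} \<times> {m..<n}. card {a, b})"
    unfolding sum.reindex[OF inj] by (simp add: comp_def case_prod_beta)
  also have "\<dots> = (\<Sum>(a, b)\<in>{1..<m} \<times> {m..<n}. 2)"
    by (intro sum.cong) auto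
  finally have E: "(\<Sum>Q\<in>?E. card Q) = 2 * ((m - 1) * (n - m))" by simp
  have "0 \<notin> Q" if "Q \<in> ?E" for Q using that by auto
  then have "insert 0 {m..<n} \<notin> ?E" by (metis insertI1)
  then have "(\<Sum>Q\<in>star_clique_partition n m. card Q) = card (insert 0 {m..<n}) + (\<Sum>Q\<in>?E. card Q)"
    unfolding star_clique_partition_def by (intro sum.insert) auto
  also have "\<dots> = card (insert 0 {m..<n}) + 2 * ((m - 1) * (n - m))"
    unfolding E ..
  also have "\<dots> = (n - m) + 1 + 2 * ((m - 1) * (n - m))"
    using assms by simp
  also have "\<dots> = (2 * m - 1) * (n - m) + 1"
  proof -
    obtain j where "m = Suc j" using assms(1) by (cases m) auto
    then show ?thesis by (simp add: algebra_simps)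
  qed
  finally show ?thesis .
qed

lemma finite_clique_partition_sizes: "finite {\<Sum>Q\<in>P. card Q | P. is_clique_partition n m P}"
proof -
  have "{P. is_clique_partition n m P} \<subseteq> Pow (Pow {0..<n})"
    by (auto simp: is_clique_partition_def is_clique_def)
  then have "finite {P. is_clique_partition n m P}" by (rule finite_subset) simp
  then show ?thesis by (simp add: setcompr_eq_image)
qed

lemma scp_KnKm_le:
  "is_clique_partition n m P \<Longrightarrow> scp_KnKm n m \<le> (\<Sum>Q\<in>P. card Q)"
  unfolding scp_KnKm_def by (rule Min_le[OF finite_clique_partition_sizes]) blast

lemma scp_KnKm_attained:
  assumes "is_clique_partition n m P"
  obtains P' where "is_clique_partition n m P'" "scp_KnKm n m = (\<Sum>Q\<in>P'. card Q)"
proof -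
  have "scp_KnKm n m \<in> {\<Sum>Q\<in>P. card Q | P. is_clique_partition n m P}"
    unfolding scp_KnKm_def using finite_clique_partition_sizes assms by (intro Min_in) auto
  then obtain P' where "is_clique_partition n m P'" "scp_KnKm n m = (\<Sum>Q\<in>P'. card Q)"
    by auto
  then show ?thesis by (rule that)
qed

theorem scp_KnKm_bounds:
  assumes "0 < m" and "4 * m^2 \<le> n"
  shows "(2 * m - 1) * (n - m) \<le> scp_KnKm n m"
    and "scp_KnKm n m \<le> (2 * m - 1) * (n - m) + 1"
proof -
  have "m < n" using less_of_four_mul_sq_le[OF assms] .
  then have star: "is_clique_partition n m (star_clique_partition n m)"
    by (rule is_clique_partition_star[OF assms(1)])
  obtain P where "is_clique_partition n m P" "scp_KnKm n m = (\<Sum>Q\<in>P. card Q)"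
    using scp_KnKm_attained[OF star] .
  then show "(2 * m - 1) * (n - m) \<le> scp_KnKm n m"
    using clique_partition_size_ge[OF _ assms] by simp
  show "scp_KnKm n m \<le> (2 * m - 1) * (n - m) + 1"
    using scp_KnKm_le[OF star] sum_card_star_clique_partition[OF assms(1) \<open>m < n\<close>] by simp
qed

lemma four_mul_sq_le_of_le_half_sqrt:
  fixes m n :: nat
  assumes "real m \<le> sqrt (real n) / 2"
  shows "4 * m^2 \<le> n"
proof -
  have "(2 * real m)^2 \<le> (sqrt (real n))^2" using assms by (intro power_mono) auto
  then have "real (4 * m^2) \<le> real n" by (simp add: power_mult_distrib)
  then show ?thesis by linarith
qed

theorem mainTheorem8:
  "\<exists>(C::real) (c::real) (m0::nat). C > 0 \<and> c > 0 \<and>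
     (\<forall>n m::nat. 0 < n \<longrightarrow> 0 < m \<longrightarrow> real m \<le> sqrt (real n) / 2 \<longrightarrow>
        real (scp_KnKm n m) \<ge> (2 * real m - 1) * real n - C * (real m)^2 \<and>
        (m \<ge> m0 \<longrightarrow> real (scp_KnKm n m) \<le> (2 * real m - 1) * real n - c * (real m)^2))"
proof (rule exI[of _ 2], rule exI[of _ 1], rule exI[of _ "2::nat"], intro conjI allI impI)
  fix n m :: nat
  assume m: "0 < m" and "real m \<le> sqrt (real n) / 2"
  then have n: "4 * m^2 \<le> n" by (intro four_mul_sq_le_of_le_half_sqrt)
  have "m \<le> n" using less_of_four_mul_sq_le[OF m n] by simp
  then have base: "real ((2 * m - 1) * (n - m)) = (2 * real m - 1) * (real n - real m)"
    using m by (simp add: of_nat_diff)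
  have "(2 * real m - 1) * real n - 2 * (real m)^2 \<le> (2 * real m - 1) * (real n - real m)"
    by (simp add: power2_eq_square algebra_simps)
  then show "(2 * real m - 1) * real n - 2 * (real m)^2 \<le> real (scp_KnKm n m)"
    using scp_KnKm_bounds(1)[OF m n] base by linarith
  assume "2 \<le> m"
  then have "2 * m \<le> m * m" by (intro mult_right_mono) auto
  with \<open>2 \<le> m\<close> have "m + 1 \<le> m^2" unfolding power2_eq_square by linarith
  then have "real m + 1 \<le> (real m)^2" by (metis of_nat_1 of_nat_add of_nat_le_iff of_nat_power)
  then have "(2 * real m - 1) * (real n - real m) + 1 \<le> (2 * real m - 1) * real n - 1 * (real m)^2"
    by (simp add: power2_eq_square algebra_simps)
  then show "real (scp_KnKm n m) \<le> (2 * real m - 1) * real n - 1 * (real m)^2"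
    using scp_KnKm_bounds(2)[OF m n] base by linarith
qed simp_all

end
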